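(* Let $d\ge1$, $n\ge0$, and for an $\mathbf{OI}_d$-morphism $\phi=(f,g)\colon[n]\to[m]$ let $w(\phi)$ be the word of length $m$ in the alphabet $\{*,1,\dots,d\}$ whose $i$-th letter is $*$ if $i\in f([n])$ and is $g(i)$ otherwise. Then $\phi$ is determined by $w(\phi)$, and for $\mathbf{OI}_d$-morphisms $\phi\colon[n]\to[m]$, $\phi'\colon[n]\to[m']$, there exists an $\mathbf{OI}_d$-morphism $\psi\colon[m]\to[m']$ with $\psi\circ\phi=\phi'$ if and only if $w(\phi)$ is a (not necessarily contiguous) subsequence of $w(\phi')$. Consequently the set $X_n=\coprod_{m\ge n}\hom_{\mathbf{OI}_d}([n],[m])$, partially ordered by $\phi\le\phi'$ iff $\phi'=\psi\circ\phi$ for some $\mathbf{OI}_d$-morphism $\psi$, is well-ordered in the sense that every infinite sequence $\phi_1,\phi_2,\dots$ in $X_n$ has $i<j$ with $\phi_i\le\phi_j$.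
   Context: $\mathbf{OI}_d$ is the category whose objects are finite totally ordered sets; a morphism $S\to T$ is a pair $(f,g)$ with $f\colon S\to T$ an order-preserving injection and $g\colon T\setminus f(S)\to[d]=\{1,\dots,d\}$ arbitrary; the composite of $(f,g)\colon S\to T$ and $(f',g')\colon T\to U$ is $(f'\circ f,g'')$ where $g''(u)=g'(u)$ for $u\notin f'(T)$ and $g''(f'(t))=g(t)$ for $t\in T\setminus f(S)$. $[n]=\{1,\dots,n\}$ with its usual order. *)

theory Defs
  imports Main "HOL-Library.FuncSet" "HOL-Library.Sublist"
begin

text \<open>Both functions are taken
  extensional (undefined outside their domain), so that equal morphisms are equal pairs.\<close>
definition OI_mor :: "nat \<Rightarrow> nat \<Rightarrow> nat \<Rightarrow> ((nat \<Rightarrow> nat) \<times> (nat \<Rightarrow> nat)) set" where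
  "OI_mor d n m = {(f, g). f \<in> {1..n} \<rightarrow>\<^sub>E {1..m} \<and> strict_mono_on {1..n} f
      \<and> g \<in> ({1..m} - f ` {1..n}) \<rightarrow>\<^sub>E {1..d}}"

definition OI_comp :: "nat \<Rightarrow> nat \<Rightarrow> nat \<Rightarrow> (nat \<Rightarrow> nat) \<times> (nat \<Rightarrow> nat)
    \<Rightarrow> (nat \<Rightarrow> nat) \<times> (nat \<Rightarrow> nat) \<Rightarrow> (nat \<Rightarrow> nat) \<times> (nat \<Rightarrow> nat)" where
  "OI_comp n m m' psi phi =
     (case psi of (f', g') \<Rightarrow> case phi of (f, g) \<Rightarrow>
       (restrict (f' \<circ> f) {1..n},
        restrict (\<lambda>u. if u \<in> f' ` {1..m} then g (the_inv_into {1..m} f' u) else g' u)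
                 ({1..m'} - (f' \<circ> f) ` {1..n})))"

text \<open>The word w(phi) of length m over {*,1..d}; * is represented by None.\<close>
definition OI_word :: "nat \<Rightarrow> nat \<Rightarrow> (nat \<Rightarrow> nat) \<times> (nat \<Rightarrow> nat) \<Rightarrow> nat option list" where
  "OI_word n m phi = (case phi of (f, g) \<Rightarrow>
      map (\<lambda>i. if i \<in> f ` {1..n} then None else Some (g i)) [1..<m+1])"

definition OI_X :: "nat \<Rightarrow> nat \<Rightarrow> (nat \<times> ((nat \<Rightarrow> nat) \<times> (nat \<Rightarrow> nat))) set" where
  "OI_X d n = (SIGMA m:{n..}. OI_mor d n m)"

definition OI_le :: "nat \<Rightarrow> nat \<Rightarrow> nat \<times> ((nat \<Rightarrow> nat) \<times> (nat \<Rightarrow> nat))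
    \<Rightarrow> nat \<times> ((nat \<Rightarrow> nat) \<times> (nat \<Rightarrow> nat)) \<Rightarrow> bool" where
  "OI_le d n x y = (\<exists>psi \<in> OI_mor d (fst x) (fst y). OI_comp n (fst x) (fst y) psi (snd x) = snd y)"

end

(*
  A morphism (f, g) : [n] -> [m] is recorded by its word: the stars mark the image of f,
  which determines f because f is increasing, and the remaining letters are the values of g.
  Post-composing with psi = (F, G) places the letters of phi at the positions F t and fills
  the other positions with the values of G, so the word of phi occurs along F as a
  subsequence of the word of psi o phi. Conversely, an embedding of words defines F, the
  unmatched letters define G, and since F maps the n stars of one word injectively to the
  n stars of the other, psi o phi has the prescribed word and hence is the prescribed
  morphism. The statement about X_n is then Higman's lemma for words over the finite
  alphabet {*, 1, ..., d}, proved by Nash-Williams' minimal bad sequence argument.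
*)

theory Submission
  imports Defs "HOL-Library.Infinite_Set"
begin

lemma list_emb_conv_strict_mono:
  "list_emb P xs ys \<longleftrightarrow>
    (\<exists>h. strict_mono_on {..<length xs} h \<and> (\<forall>i<length xs. h i < length ys \<and> P (xs ! i) (ys ! h i)))"
proof
  assume "list_emb P xs ys"
  then show "\<exists>h. strict_mono_on {..<length xs} h \<and> (\<forall>i<length xs. h i < length ys \<and> P (xs ! i) (ys ! h i))"
  proof (induction rule: list_emb.induct)
    case (list_emb_Nil ys)
    then show ?case by (auto simp: strict_mono_on_def)
  next
    case (list_emb_Cons xs ys y)
    then obtain h where "strict_mono_on {..<length xs} h" "\<forall>i<length xs. h i < length ys \<and> P (xs ! i) (ys ! h i)"
      by blast
    then show ?case
      by (intro exI[of _ "Suc \<circ> h"]) (auto simp: strict_mono_on_def)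
  next
    case (list_emb_Cons2 x y xs ys)
    then obtain h where "strict_mono_on {..<length xs} h" "\<forall>i<length xs. h i < length ys \<and> P (xs ! i) (ys ! h i)"
      by blast
    with \<open>P x y\<close> show ?case
      by (intro exI[of _ "case_nat 0 (Suc \<circ> h)"]) (auto simp: strict_mono_on_def nth_Cons split: nat.splits)
  qed
next
  assume "\<exists>h. strict_mono_on {..<length xs} h \<and> (\<forall>i<length xs. h i < length ys \<and> P (xs ! i) (ys ! h i))"
  then obtain h where "strict_mono_on {..<length xs} h" "\<forall>i<length xs. h i < length ys \<and> P (xs ! i) (ys ! h i)"
    by blast
  then show "list_emb P xs ys"
  proof (induction xs arbitrary: ys h)
    case Nil
    then show ?case by simp
  next
    case (Cons x xs)
    define k where "k = h 0"
    have k_less: "k < length ys" and "P x (ys ! k)"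
      using Cons.prems(2) by (auto simp: k_def)
    have h_gt: "k < h (Suc i)" if "i < length xs" for i
      using strict_mono_onD[OF Cons.prems(1), of 0 "Suc i"] that by (simp add: k_def)
    have "list_emb P xs (drop (Suc k) ys)"
    proof (rule Cons.IH[of "\<lambda>i. h (Suc i) - Suc k"])
      show "strict_mono_on {..<length xs} (\<lambda>i. h (Suc i) - Suc k)"
      proof (rule strict_mono_onI)
        fix r s assume "r \<in> {..<length xs}" "s \<in> {..<length xs}" "r < s"
        then show "h (Suc r) - Suc k < h (Suc s) - Suc k"
          using strict_mono_onD[OF Cons.prems(1), of "Suc r" "Suc s"] h_gt[of r] by simp
      qed
      show "\<forall>i<length xs. h (Suc i) - Suc k < length (drop (Suc k) ys) \<and>
          P (xs ! i) (drop (Suc k) ys ! (h (Suc i) - Suc k))"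
      proof (intro allI impI)
        fix i assume i: "i < length xs"
        then have "h (Suc i) < length ys \<and> P ((x # xs) ! Suc i) (ys ! h (Suc i))"
          using Cons.prems(2)[rule_format, of "Suc i"] by simp
        then have "h (Suc i) < length ys" "P (xs ! i) (ys ! h (Suc i))"
          by simp_all
        with h_gt[OF i] show "h (Suc i) - Suc k < length (drop (Suc k) ys) \<and>
            P (xs ! i) (drop (Suc k) ys ! (h (Suc i) - Suc k))"
          by simp
      qed
    qed
    then have "list_emb P (x # xs) (ys ! k # drop (Suc k) ys)"
      using \<open>P x (ys ! k)\<close> by simp
    then show ?case
      using id_take_nth_drop[OF k_less] by (metis list_emb_append2)
  qed
qed

lemma obtain_list_emb_index_map:
  assumes "list_emb P xs ys"
  obtains F where "F \<in> {1..length xs} \<rightarrow>\<^sub>E {1..length ys}" "strict_mono_on {1..length xs} F"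
    "\<And>t. t \<in> {1..length xs} \<Longrightarrow> P (xs ! (t - 1)) (ys ! (F t - 1))"
proof -
  obtain h where h_mono: "strict_mono_on {..<length xs} h"
    and h: "\<forall>i<length xs. h i < length ys \<and> P (xs ! i) (ys ! h i)"
    using assms unfolding list_emb_conv_strict_mono by blast
  define F where "F = restrict (\<lambda>t. Suc (h (t - 1))) {1..length xs}"
  show thesis
  proof (rule that)
    show "F \<in> {1..length xs} \<rightarrow>\<^sub>E {1..length ys}"
      using h by (auto simp: F_def Suc_le_eq)
    show "strict_mono_on {1..length xs} F"
      by (rule strict_mono_onI) (use strict_mono_onD[OF h_mono] in \<open>auto simp: F_def\<close>)
    show "P (xs ! (t - 1)) (ys ! (F t - 1))" if "t \<in> {1..length xs}" for t
      using h that by (auto simp: F_def)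
  qed
qed

lemma strict_mono_on_eq_if_image_eq:
  fixes f g :: "'a::linorder \<Rightarrow> 'b::linorder"
  assumes "finite A" "strict_mono_on A f" "strict_mono_on A g" "f ` A = g ` A" "x \<in> A"
  shows "f x = g x"
proof -
  define xs where "xs = sorted_list_of_set A"
  have sorted_map: "sorted_wrt (<) (map h xs)" if "strict_mono_on A h" for h :: "'a \<Rightarrow> 'b"
  proof -
    have "sorted_wrt (<) xs" "set xs = A"
      using \<open>finite A\<close> by (simp_all add: xs_def)
    then show ?thesis
      unfolding sorted_wrt_map
      by (rule_tac sorted_wrt_mono_rel[of _ "(<)"]) (use that in \<open>auto simp: strict_mono_on_def\<close>)
  qed
  have "map f xs = map g xs"
    using strict_sorted_equal[OF sorted_map[OF assms(2)] sorted_map[OF assms(3)]] assms(1,4)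
    by (simp add: xs_def)
  then show ?thesis
    using assms(1,5) by (simp add: xs_def)
qed

definition good :: "('a \<Rightarrow> 'a \<Rightarrow> bool) \<Rightarrow> (nat \<Rightarrow> 'a) \<Rightarrow> bool" where
  "good P f \<longleftrightarrow> (\<exists>i j. i < j \<and> P (f i) (f j))"

lemma diag_eq_if_prefix_stable:
  assumes "\<And>k i. i \<le> k \<Longrightarrow> F (Suc k) i = F k i" "i \<le> k"
  shows "F k i = F i i"
  using assms(2)
proof (induction k)
  case (Suc k)
  then show ?case
    using assms(1)[of i k] by (cases "i = Suc k") simp_all
qed simp

lemma not_good_diag:
  assumes "\<And>k. \<not> good P (F k)" "\<And>k i. i \<le> k \<Longrightarrow> F (Suc k) i = F k i"
  shows "\<not> good P (\<lambda>i. F i i)"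
proof
  assume "good P (\<lambda>i. F i i)"
  then obtain i j where "i < j" "P (F i i) (F j j)"
    by (auto simp: good_def)
  then have "P (F j i) (F j j)"
    using diag_eq_if_prefix_stable[of F i j, OF assms(2)] by simp
  with \<open>i < j\<close> assms(1)[of j] show False
    by (auto simp: good_def)
qed

lemma ex_minimal_bad_seq:
  fixes \<mu> :: "'a \<Rightarrow> nat"
  assumes "\<not> good P f" "\<forall>i. f i \<in> A"
  shows "\<exists>m. \<not> good P m \<and> (\<forall>i. m i \<in> A) \<and>
    (\<forall>g k. \<not> good P g \<and> (\<forall>i. g i \<in> A) \<and> (\<forall>i<k. g i = m i) \<longrightarrow> \<mu> (m k) \<le> \<mu> (g k))"
proof -
  define B where "B = {g. \<not> good P g \<and> (\<forall>i. g i \<in> A)}"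
  define extend where "extend k h = (ARG_MIN (\<lambda>g. \<mu> (g k)) g. g \<in> B \<and> (\<forall>i<k. g i = h i))" for k h
  have extend: "extend k h \<in> B \<and> (\<forall>i<k. extend k h i = h i) \<and>
      (\<forall>g\<in>B. (\<forall>i<k. g i = h i) \<longrightarrow> \<mu> (extend k h k) \<le> \<mu> (g k))" if "h \<in> B" for k h
    using arg_min_nat_lemma[of "\<lambda>g. g \<in> B \<and> (\<forall>i<k. g i = h i)" h "\<lambda>g. \<mu> (g k)"] that
    unfolding extend_def by blast
  \<comment> \<open>F k is a bad sequence whose terms 0, ..., k have been chosen one after the other of minimal size.\<close>
  define F where "F = rec_nat (extend 0 f) (\<lambda>k. extend (Suc k))"
  have F_0: "F 0 = extend 0 f" and F_Suc: "F (Suc k) = extend (Suc k) (F k)" for k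
    by (simp_all add: F_def)
  have "f \<in> B"
    using assms by (simp add: B_def)
  have F_in_B: "F k \<in> B" for k
    by (induction k) (use \<open>f \<in> B\<close> extend in \<open>simp_all add: F_0 F_Suc\<close>)
  have F_stable: "F (Suc k) i = F k i" if "i \<le> k" for k i
    using extend[OF F_in_B[of k], of "Suc k"] that by (simp add: F_Suc)
  have "\<not> good P (\<lambda>i. F i i)"
    using F_in_B by (intro not_good_diag[of P F, OF _ F_stable]) (auto simp: B_def)
  moreover have "\<forall>i. F i i \<in> A"
    using F_in_B unfolding B_def by blast
  moreover have "\<mu> (F k k) \<le> \<mu> (g k)" if "g \<in> B" "\<forall>i<k. g i = F i i" for g k
  proof (cases k)
    case 0
    then show ?thesis
      using extend[OF \<open>f \<in> B\<close>, of 0] that by (simp add: F_0)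
  next
    case (Suc k')
    have "\<forall>i<Suc k'. g i = F k' i"
      using that(2) diag_eq_if_prefix_stable[of F _ k', OF F_stable] Suc by simp
    then show ?thesis
      using extend[OF F_in_B[of k'], of "Suc k'"] that(1) Suc by (simp add: F_Suc)
  qed
  ultimately show ?thesis
    unfolding B_def by blast
qed

lemma not_good_subseq_strip_heads:
  assumes bad: "\<not> good subseq m" and e: "strict_mono e" and heads: "\<And>k. m (e k) = a # ws k"
  shows "\<not> good subseq (\<lambda>k. if k < e 0 then m k else ws (k - e 0))"
  unfolding good_def
proof (intro notI, elim exE conjE)
  fix i j assume "i < j" and ij: "subseq (if i < e 0 then m i else ws (i - e 0))
      (if j < e 0 then m j else ws (j - e 0))"
  have e0_le: "e 0 \<le> e k" for k
    using e by (simp add: strict_mono_less_eq)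
  consider "j < e 0" | "i < e 0" "e 0 \<le> j" | "e 0 \<le> i"
    using \<open>i < j\<close> by linarith
  then show False
  proof cases
    case 1
    then show False
      using bad ij \<open>i < j\<close> by (auto simp: good_def)
  next
    case 2
    then have "subseq (m i) (m (e (j - e 0)))"
      using ij heads[of "j - e 0"] by (simp add: list_emb_Cons)
    moreover have "i < e (j - e 0)"
      using 2 e0_le by (meson order_less_le_trans)
    ultimately show False
      using bad by (auto simp: good_def)
  next
    case 3
    then have "subseq (m (e (i - e 0))) (m (e (j - e 0)))"
      using ij \<open>i < j\<close> heads[of "i - e 0"] heads[of "j - e 0"] by simp
    moreover have "e (i - e 0) < e (j - e 0)"
      using 3 \<open>i < j\<close> e by (simp add: strict_mono_less)
    ultimately show False
      using bad by (auto simp: good_def)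
  qed
qed

theorem higman_good_subseq:
  assumes "finite A" "\<forall>i. f i \<in> lists A"
  shows "good subseq f"
proof (rule ccontr)
  assume "\<not> good subseq f"
  then obtain m where m_bad: "\<not> good subseq m" and m_A: "\<forall>i. m i \<in> lists A"
    and m_min: "\<And>g k. \<not> good subseq g \<Longrightarrow> \<forall>i. g i \<in> lists A \<Longrightarrow> \<forall>i<k. g i = m i \<Longrightarrow>
        length (m k) \<le> length (g k)"
    using ex_minimal_bad_seq[of subseq f "lists A" length] assms(2) by blast
  have m_ne: "m i \<noteq> []" for i
    using m_bad unfolding good_def by (metis lessI list_emb_Nil)
  have "range (hd \<circ> m) \<subseteq> A"
    using m_A m_ne by (auto dest: hd_in_set)
  then have "finite (range (hd \<circ> m))"
    using \<open>finite A\<close> by (rule finite_subset)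
  then obtain i0 where "infinite {i. hd (m i) = hd (m i0)}"
    using pigeonhole_infinite[of UNIV "hd \<circ> m"] by auto
  from infinite_enumerate[OF this] obtain e :: "nat \<Rightarrow> nat"
    where e: "strict_mono e" "\<And>k. hd (m (e k)) = hd (m i0)"
    by blast
  have heads: "m (e k) = hd (m i0) # tl (m (e k))" for k
    using e(2)[of k] m_ne[of "e k"] by (cases "m (e k)") auto
  \<comment> \<open>Stripping the common head from m (e 0) onwards keeps the sequence bad but shortens m (e 0).\<close>
  define g where "g k = (if k < e 0 then m k else tl (m (e (k - e 0))))" for k
  have "\<not> good subseq g"
    unfolding g_def using not_good_subseq_strip_heads[OF m_bad e(1) heads] .
  moreover have "\<forall>i. g i \<in> lists A"
  proof
    have "tl xs \<in> lists A" if "xs \<in> lists A" for xs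
      using that by (cases xs) auto
    with m_A show "g i \<in> lists A" for i
      by (simp add: g_def)
  qed
  ultimately have "length (m (e 0)) \<le> length (g (e 0))"
    by (rule m_min) (simp add: g_def)
  then show False
    using m_ne[of "e 0"] by (cases "m (e 0)") (simp_all add: g_def)
qed

lemma OI_morD:
  assumes "(f, g) \<in> OI_mor d n m"
  shows "f \<in> {1..n} \<rightarrow>\<^sub>E {1..m}" "strict_mono_on {1..n} f"
    "g \<in> ({1..m} - f ` {1..n}) \<rightarrow>\<^sub>E {1..d}"
  using assms by (simp_all add: OI_mor_def)

lemma OI_mor_image_subset: "(f, g) \<in> OI_mor d n m \<Longrightarrow> f ` {1..n} \<subseteq> {1..m}"
  by (auto dest!: OI_morD(1))

lemma length_OI_word [simp]: "length (OI_word n m phi) = m"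
  by (simp add: OI_word_def split: prod.split)

lemma OI_word_nth:
  "k \<in> {1..m} \<Longrightarrow> OI_word n m (f, g) ! (k - 1) = (if k \<in> f ` {1..n} then None else Some (g k))"
  by (auto simp: OI_word_def simp del: upt_Suc)

lemma OI_word_stars:
  assumes "(f, g) \<in> OI_mor d n m"
  shows "{k \<in> {1..m}. OI_word n m (f, g) ! (k - 1) = None} = f ` {1..n}"
  using OI_mor_image_subset[OF assms] OI_word_nth[of _ m n f g] by (auto split: if_splits)

lemma OI_word_inject:
  assumes "phi \<in> OI_mor d n m" "phi' \<in> OI_mor d n m" "OI_word n m phi = OI_word n m phi'"
  shows "phi = phi'"
proof -
  obtain f g f' g' where pairs: "phi = (f, g)" "phi' = (f', g')"
    by (cases phi, cases phi') auto
  note phi = assms(1)[unfolded pairs] and phi' = assms(2)[unfolded pairs]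
    and eq = assms(3)[unfolded pairs]
  have image_eq: "f ` {1..n} = f' ` {1..n}"
    using OI_word_stars[OF phi] OI_word_stars[OF phi'] eq by simp
  have "f = f'"
    using OI_morD[OF phi] OI_morD[OF phi']
      strict_mono_on_eq_if_image_eq[OF _ OI_morD(2)[OF phi] OI_morD(2)[OF phi'] image_eq]
    by (intro extensionalityI[of _ "{1..n}"]) (auto simp: PiE_def)
  moreover have "g = g'"
  proof (rule extensionalityI[of _ "{1..m} - f ` {1..n}"])
    show "g \<in> extensional ({1..m} - f ` {1..n})" "g' \<in> extensional ({1..m} - f ` {1..n})"
      using OI_morD(3)[OF phi] OI_morD(3)[OF phi'] image_eq by (auto simp: PiE_def)
    show "g k = g' k" if "k \<in> {1..m} - f ` {1..n}" for k
      using eq OI_word_nth[of k m n f g] OI_word_nth[of k m n f' g'] that image_eq by simp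
  qed
  ultimately show ?thesis
    by (simp add: pairs)
qed

lemma OI_comp_Pair:
  "OI_comp n m m' (F, G) (f, g) =
    (restrict (F \<circ> f) {1..n},
     restrict (\<lambda>u. if u \<in> F ` {1..m} then g (the_inv_into {1..m} F u) else G u)
       ({1..m'} - (F \<circ> f) ` {1..n}))"
  by (simp add: OI_comp_def)

lemma OI_comp_in_OI_mor:
  assumes phi: "(f, g) \<in> OI_mor d n m" and psi: "(F, G) \<in> OI_mor d m m'"
  shows "OI_comp n m m' (F, G) (f, g) \<in> OI_mor d n m'"
proof -
  note f = OI_morD[OF phi] and F = OI_morD[OF psi]
  have inj_F: "inj_on F {1..m}"
    using F(2) by (rule strict_mono_on_imp_inj_on)
  have "strict_mono_on {1..n} (restrict (F \<circ> f) {1..n})"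
    using f(1) by (intro strict_mono_onI) (auto intro!: strict_mono_onD[OF F(2)] strict_mono_onD[OF f(2)])
  moreover have "(if u \<in> F ` {1..m} then g (the_inv_into {1..m} F u) else G u) \<in> {1..d}"
    if "u \<in> {1..m'} - (F \<circ> f) ` {1..n}" for u
  proof (cases "u \<in> F ` {1..m}")
    case True
    then obtain t where "t \<in> {1..m}" "u = F t" by blast
    with that have "t \<in> {1..m} - f ` {1..n}" by auto
    moreover have "the_inv_into {1..m} F u = t"
      using the_inv_into_f_f[OF inj_F \<open>t \<in> {1..m}\<close>] \<open>u = F t\<close> by simp
    ultimately show ?thesis
      using True f(3) by auto
  qed (use that F(3) in auto)
  ultimately show ?thesis
    using f(1) F(1) by (auto simp: OI_mor_def OI_comp_Pair)
qed

lemma OI_word_comp_nth_image: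
  assumes phi: "(f, g) \<in> OI_mor d n m" and psi: "(F, G) \<in> OI_mor d m m'" and t: "t \<in> {1..m}"
  shows "OI_word n m' (OI_comp n m m' (F, G) (f, g)) ! (F t - 1) = OI_word n m (f, g) ! (t - 1)"
proof -
  have inj_F: "inj_on F {1..m}"
    using OI_morD(2)[OF psi] by (rule strict_mono_on_imp_inj_on)
  have Ft: "F t \<in> {1..m'}"
    using OI_morD(1)[OF psi] t by auto
  have star_iff: "F t \<in> (F \<circ> f) ` {1..n} \<longleftrightarrow> t \<in> f ` {1..n}"
    using inj_on_image_mem_iff[OF inj_F t OI_mor_image_subset[OF phi]] by (simp add: image_comp)
  have "the_inv_into {1..m} F (F t) = t"
    using the_inv_into_f_f[OF inj_F t] .
  then show ?thesis
    using OI_word_nth[OF Ft, of n "restrict (F \<circ> f) {1..n}"] OI_word_nth[OF t, of n f g] Ft t star_iff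
    by (simp add: OI_comp_Pair)
qed

lemma OI_word_comp_nth_notin_image:
  assumes phi: "(f, g) \<in> OI_mor d n m" and u: "u \<in> {1..m'} - F ` {1..m}"
  shows "OI_word n m' (OI_comp n m m' (F, G) (f, g)) ! (u - 1) = Some (G u)"
proof -
  have "u \<notin> (F \<circ> f) ` {1..n}"
    using u OI_mor_image_subset[OF phi] by auto
  then show ?thesis
    using OI_word_nth[of u m' n "restrict (F \<circ> f) {1..n}"] u by (simp add: OI_comp_Pair)
qed

lemma subseq_OI_word_comp:
  assumes phi: "(f, g) \<in> OI_mor d n m" and psi: "(F, G) \<in> OI_mor d m m'"
  shows "subseq (OI_word n m (f, g)) (OI_word n m' (OI_comp n m m' (F, G) (f, g)))"
  unfolding list_emb_conv_strict_mono
proof (intro exI conjI allI impI)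
  have F: "F t \<in> {1..m'}" if "t \<in> {1..m}" for t
    using OI_morD(1)[OF psi] that by auto
  show "strict_mono_on {..<length (OI_word n m (f, g))} (\<lambda>i. F (Suc i) - 1)"
  proof (rule strict_mono_onI)
    fix r s assume "r \<in> {..<length (OI_word n m (f, g))}" "s \<in> {..<length (OI_word n m (f, g))}" "r < s"
    then show "F (Suc r) - 1 < F (Suc s) - 1"
      using strict_mono_onD[OF OI_morD(2)[OF psi], of "Suc r" "Suc s"] F[of "Suc r"] by auto
  qed
  fix i assume "i < length (OI_word n m (f, g))"
  then have i: "Suc i \<in> {1..m}" by simp
  then show "F (Suc i) - 1 < length (OI_word n m' (OI_comp n m m' (F, G) (f, g)))"
    using F[OF i] by auto
  show "OI_word n m (f, g) ! i = OI_word n m' (OI_comp n m m' (F, G) (f, g)) ! (F (Suc i) - 1)"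
    using OI_word_comp_nth_image[OF phi psi i] by simp
qed

lemma OI_word_comp_eqI:
  assumes phi: "(f, g) \<in> OI_mor d n m" and psi: "(F, G) \<in> OI_mor d m m'" and "length w' = m'"
    and image: "\<And>t. t \<in> {1..m} \<Longrightarrow> w' ! (F t - 1) = OI_word n m (f, g) ! (t - 1)"
    and off_image: "\<And>u. u \<in> {1..m'} - F ` {1..m} \<Longrightarrow> w' ! (u - 1) = Some (G u)"
  shows "OI_word n m' (OI_comp n m m' (F, G) (f, g)) = w'"
proof (rule nth_equalityI)
  fix i assume "i < length (OI_word n m' (OI_comp n m m' (F, G) (f, g)))"
  then have u: "Suc i \<in> {1..m'}" by simp
  show "OI_word n m' (OI_comp n m m' (F, G) (f, g)) ! i = w' ! i"
  proof (cases "Suc i \<in> F ` {1..m}")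
    case True
    then obtain t where "t \<in> {1..m}" "Suc i = F t" by blast
    then show ?thesis
      using OI_word_comp_nth_image[OF phi psi] image by (metis diff_Suc_1)
  next
    case False
    then show ?thesis
      using OI_word_comp_nth_notin_image[OF phi, of "Suc i"] off_image[of "Suc i"] u by simp
  qed
qed (simp add: \<open>length w' = m'\<close>)

lemma OI_word_embedding_maps_stars_onto_stars:
  assumes phi: "(f, g) \<in> OI_mor d n m" and phi': "(f', g') \<in> OI_mor d n m'"
    and F_mem: "F \<in> {1..m} \<rightarrow>\<^sub>E {1..m'}" and F_mono: "strict_mono_on {1..m} F"
    and F_letter: "\<And>t. t \<in> {1..m} \<Longrightarrow> OI_word n m (f, g) ! (t - 1) = OI_word n m' (f', g') ! (F t - 1)"
  shows "F ` f ` {1..n} = f' ` {1..n}"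
  \<comment> \<open>Both words have exactly n stars, and F maps stars to stars injectively.\<close>
proof (rule card_subset_eq)
  show "finite (f' ` {1..n})" by simp
  show "F ` f ` {1..n} \<subseteq> f' ` {1..n}"
  proof
    fix u assume "u \<in> F ` f ` {1..n}"
    then obtain t where t: "t \<in> f ` {1..n}" "u = F t" by blast
    have "t \<in> {k \<in> {1..m}. OI_word n m (f, g) ! (k - 1) = None}"
      using OI_word_stars[OF phi] t(1) by (simp only:)
    then have "t \<in> {1..m}" "OI_word n m (f, g) ! (t - 1) = None"
      by simp_all
    then have "u \<in> {1..m'}" "OI_word n m' (f', g') ! (u - 1) = None"
      using F_mem F_letter[of t] t(2) by (auto simp del: One_nat_def)
    then show "u \<in> f' ` {1..n}"
      using OI_word_stars[OF phi'] by blast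
  qed
  have "inj_on F (f ` {1..n})"
    using strict_mono_on_imp_inj_on[OF F_mono] OI_mor_image_subset[OF phi] by (rule inj_on_subset)
  then show "card (F ` f ` {1..n}) = card (f' ` {1..n})"
    using OI_morD(2)[OF phi] OI_morD(2)[OF phi']
    by (simp add: card_image strict_mono_on_imp_inj_on)
qed

lemma OI_comp_exists_if_subseq:
  assumes phi: "(f, g) \<in> OI_mor d n m" and phi': "(f', g') \<in> OI_mor d n m'"
    and sub: "subseq (OI_word n m (f, g)) (OI_word n m' (f', g'))"
  shows "\<exists>psi \<in> OI_mor d m m'. OI_comp n m m' psi (f, g) = (f', g')"
proof -
  define w' where "w' = OI_word n m' (f', g')"
  obtain F where F_mem: "F \<in> {1..m} \<rightarrow>\<^sub>E {1..m'}" and F_mono: "strict_mono_on {1..m} F"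
    and F_letter: "\<And>t. t \<in> {1..m} \<Longrightarrow> OI_word n m (f, g) ! (t - 1) = w' ! (F t - 1)"
    using obtain_list_emb_index_map[OF sub] unfolding w'_def length_OI_word by blast
  have F_stars: "F ` f ` {1..n} = f' ` {1..n}"
    using OI_word_embedding_maps_stars_onto_stars[OF phi phi' F_mem F_mono] F_letter
    unfolding w'_def by blast
  define G where "G = restrict (\<lambda>u. the (w' ! (u - 1))) ({1..m'} - F ` {1..m})"
  have G_letter: "w' ! (u - 1) = Some (g' u)" "G u = g' u" if "u \<in> {1..m'} - F ` {1..m}" for u
  proof -
    have "u \<notin> f' ` {1..n}"
      using that F_stars OI_mor_image_subset[OF phi] by blast
    then show "w' ! (u - 1) = Some (g' u)"
      using OI_word_nth[of u m' n f' g'] that by (simp add: w'_def)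
    then show "G u = g' u"
      using that by (simp add: G_def)
  qed
  have "G \<in> ({1..m'} - F ` {1..m}) \<rightarrow>\<^sub>E {1..d}"
  proof
    fix u assume u: "u \<in> {1..m'} - F ` {1..m}"
    then have "u \<in> {1..m'} - f' ` {1..n}"
      using F_stars OI_mor_image_subset[OF phi] by blast
    then show "G u \<in> {1..d}"
      using G_letter(2)[OF u] OI_morD(3)[OF phi'] by auto
  qed (auto simp: G_def)
  then have psi: "(F, G) \<in> OI_mor d m m'"
    using F_mem F_mono by (simp add: OI_mor_def)
  have "OI_word n m' (OI_comp n m m' (F, G) (f, g)) = OI_word n m' (f', g')"
    using F_letter G_letter unfolding w'_def by (intro OI_word_comp_eqI[OF phi psi]) simp_all
  then have "OI_comp n m m' (F, G) (f, g) = (f', g')"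
    using OI_word_inject[OF OI_comp_in_OI_mor[OF phi psi] phi'] by blast
  with psi show ?thesis by blast
qed

lemma OI_factors_through_iff_subseq:
  assumes "phi \<in> OI_mor d n m" "phi' \<in> OI_mor d n m'"
  shows "(\<exists>psi \<in> OI_mor d m m'. OI_comp n m m' psi phi = phi')
    \<longleftrightarrow> subseq (OI_word n m phi) (OI_word n m' phi')"
proof -
  obtain f g f' g' where pairs: "phi = (f, g)" "phi' = (f', g')"
    by (cases phi, cases phi') auto
  note phi = assms(1)[unfolded pairs] and phi' = assms(2)[unfolded pairs]
  show ?thesis
    unfolding pairs
  proof
    assume "\<exists>psi \<in> OI_mor d m m'. OI_comp n m m' psi (f, g) = (f', g')"
    then obtain F G where psi: "(F, G) \<in> OI_mor d m m'" and "OI_comp n m m' (F, G) (f, g) = (f', g')"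
      by auto
    then show "subseq (OI_word n m (f, g)) (OI_word n m' (f', g'))"
      using subseq_OI_word_comp[OF phi psi] by simp
  qed (rule OI_comp_exists_if_subseq[OF phi phi'])
qed

lemma OI_word_in_lists:
  assumes "phi \<in> OI_mor d n m"
  shows "OI_word n m phi \<in> lists (insert None (Some ` {1..d}))"
proof (cases phi)
  case (Pair f g)
  have "g k \<in> {1..d}" if "k \<in> {1..m} - f ` {1..n}" for k
    using OI_morD(3)[OF assms[unfolded Pair]] that by (rule PiE_mem)
  then show ?thesis
    by (auto simp: OI_word_def Pair)
qed

theorem mainTheorem3:
  fixes d n :: nat
  assumes "d \<ge> 1"
  shows "(\<forall>m. \<forall>phi \<in> OI_mor d n m. \<forall>phi' \<in> OI_mor d n m.
            OI_word n m phi = OI_word n m phi' \<longrightarrow> phi = phi')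
       \<and> (\<forall>m m'. \<forall>phi \<in> OI_mor d n m. \<forall>phi' \<in> OI_mor d n m'.
            (\<exists>psi \<in> OI_mor d m m'. OI_comp n m m' psi phi = phi')
            \<longleftrightarrow> subseq (OI_word n m phi) (OI_word n m' phi'))
       \<and> (\<forall>s :: nat \<Rightarrow> nat \<times> ((nat \<Rightarrow> nat) \<times> (nat \<Rightarrow> nat)).
            (\<forall>i. s i \<in> OI_X d n) \<longrightarrow> (\<exists>i j. i < j \<and> OI_le d n (s i) (s j)))"
proof (intro conjI allI ballI impI)
  show "phi = phi'"
    if "phi \<in> OI_mor d n m" "phi' \<in> OI_mor d n m" "OI_word n m phi = OI_word n m phi'" for m phi phi'
    using OI_word_inject that by blast
next
  show "(\<exists>psi \<in> OI_mor d m m'. OI_comp n m m' psi phi = phi')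
      \<longleftrightarrow> subseq (OI_word n m phi) (OI_word n m' phi')"
    if "phi \<in> OI_mor d n m" "phi' \<in> OI_mor d n m'" for m m' phi phi'
    using OI_factors_through_iff_subseq that by blast
next
  fix s :: "nat \<Rightarrow> nat \<times> ((nat \<Rightarrow> nat) \<times> (nat \<Rightarrow> nat))"
  assume "\<forall>i. s i \<in> OI_X d n"
  then have mor: "snd (s i) \<in> OI_mor d n (fst (s i))" for i
    by (metis OI_X_def mem_Sigma_iff prod.collapse)
  have "good subseq (\<lambda>i. OI_word n (fst (s i)) (snd (s i)))"
    using OI_word_in_lists[OF mor] by (intro higman_good_subseq[of "insert None (Some ` {1..d})"]) auto
  then obtain i j where "i < j" "subseq (OI_word n (fst (s i)) (snd (s i))) (OI_word n (fst (s j)) (snd (s j)))"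
    unfolding good_def by blast
  then show "\<exists>i j. i < j \<and> OI_le d n (s i) (s j)"
    using OI_factors_through_iff_subseq[OF mor mor] unfolding OI_le_def by blast
qed

end
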